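(* Let $\{a_n : n\in\mathbb{R}\cap[1,\infty)\}$ be positive real numbers such that (1) there is $c>0$ such that $\dfrac{a_{m^2n}}{a_{mn}}=\dfrac{a_{mn}}{a_n}\bigl(1+O(n^{-c})\bigr)$ for all $m\in(1.1,10)$, where the constant implicit in $O(n^{-c})$ does not depend on $m$ in this range; and (2) $\lim_{\epsilon\to0}\liminf_{n\to\infty}\inf_{n\le s\le t\le(1+\epsilon)n}\dfrac{a_t}{a_s}\ge 1$. Then there exist $0<C<\infty$, $\alpha\in\mathbb{R}$ and $c'>0$ such that $a_n=Cn^{\alpha}\bigl(1+O(n^{-c'})\bigr)$ as $n\to\infty$.
   Context: $O(n^{-c})$ denotes a quantity bounded in absolute value by a constant times $n^{-c}$ for all $n$. *)

theory Defs
  imports "HOL-Analysis.Analysis"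
begin

end

theory Submission
  imports Defs "HOL-Analysis.Kronecker_Approximation_Theorem"
begin

text \<open>
  Put f(x) = ln a(e^x). Condition (1) says that the second differences of f with step
  \<mu> = ln m are O(e^(-cx)), and condition (2) says that f is slowly decreasing.
  Summing the second differences, f(x + \<mu>) - f(x) converges geometrically along the orbit
  x + k\<mu> to a \<mu>-periodic function \<sigma>; since f(x + k\<mu>) - f(x) = k \<sigma>(x) + O(1) and f is
  slowly decreasing, \<sigma> is monotone, hence constant.
  Doing this for \<mu> = ln 2 and \<mu> = ln 3 and removing the linear part, f(x) - \<alpha>x converges
  along (ln 2)-orbits to a (ln 2)-periodic function P with P(x + ln 3) = P(x) + \<beta>.
  As ln 3 / ln 2 is irrational, the shifts b ln 3 - a ln 2 are arbitrarily small, which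
  together with the slow decrease of P forces \<beta> = 0 and P constant.
\<close>

lemma nat_multiple_bracket:
  fixes \<tau> d :: real
  assumes "\<tau> > 0" "d \<ge> 0"
  obtains j :: nat where "real j * \<tau> \<le> d" "d < real j * \<tau> + \<tau>"
proof -
  define j where "j = nat \<lfloor>d / \<tau>\<rfloor>"
  have j: "real j = of_int \<lfloor>d / \<tau>\<rfloor>"
    using assms by (simp add: j_def)
  have "real j * \<tau> \<le> d / \<tau> * \<tau>"
    using j of_int_floor_le[of "d / \<tau>"] assms by (intro mult_right_mono) auto
  then have "real j * \<tau> \<le> d"
    using assms by simp
  moreover have "d < real j * \<tau> + \<tau>"
    using j real_of_int_floor_add_one_gt[of "d / \<tau>"] assms by (simp add: pos_divide_less_eq algebra_simps)
  ultimately show thesis by (rule that)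
qed

lemma shift_iterate:
  fixes F :: "real \<Rightarrow> real"
  assumes "\<tau> \<ge> 0" and shift: "\<And>x. x \<ge> X0 \<Longrightarrow> F (x + \<tau>) = F x + \<gamma>" and "x \<ge> X0"
  shows "F (x + real k * \<tau>) = F x + real k * \<gamma>"
proof (induction k)
  case (Suc k)
  have "x + real k * \<tau> \<ge> X0"
    using assms by (simp add: add_increasing2)
  then have "F (x + real k * \<tau> + \<tau>) = F (x + real k * \<tau>) + \<gamma>"
    by (rule shift)
  then show ?case
    using Suc by (simp add: algebra_simps)
qed simp

section \<open>Shift limits\<close>

lemma exp_shift_geometric:
  "exp (-c * (x + real k * \<mu>)) = exp (-c * x) * exp (-c * \<mu>) ^ k"
proof -
  have "-c * (x + real k * \<mu>) = -c * x + real k * (-c * \<mu>)"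
    by (simp add: algebra_simps)
  then show ?thesis
    by (simp only: exp_add exp_of_nat_mult)
qed

lemma shift_orbit_increment:
  fixes h :: "real \<Rightarrow> real"
  assumes "\<mu> \<ge> 0" and step: "\<And>x. x \<ge> X0 \<Longrightarrow> \<bar>h (x + \<mu>) - h x\<bar> \<le> K * exp (-c * x)"
    and "x \<ge> X0"
  shows "\<bar>h (x + real (Suc k) * \<mu>) - h (x + real k * \<mu>)\<bar> \<le> K * exp (-c * x) * exp (-c * \<mu>) ^ k"
proof -
  have shift: "x + real (Suc k) * \<mu> = x + real k * \<mu> + \<mu>"
    by (simp add: algebra_simps)
  have "x + real k * \<mu> \<ge> X0"
    using assms by (simp add: add_increasing2)
  from step[OF this] show ?thesis
    by (simp only: shift exp_shift_geometric mult.assoc)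
qed

lemma shift_orbit_bound:
  fixes h :: "real \<Rightarrow> real"
  assumes "\<mu> > 0" "c > 0"
    and step: "\<And>x. x \<ge> X0 \<Longrightarrow> \<bar>h (x + \<mu>) - h x\<bar> \<le> K * exp (-c * x)"
    and "x \<ge> X0"
  shows "\<bar>h (x + real k * \<mu>) - h x\<bar> \<le> K * exp (-c * x) / (1 - exp (-c * \<mu>))"
proof -
  define q where "q = exp (-c * \<mu>)"
  have q: "0 < q" "q < 1"
    using assms by (auto simp: q_def)
  have A: "0 \<le> K * exp (-c * x)"
    using step[OF \<open>x \<ge> X0\<close>] by linarith
  have partial: "\<bar>h (x + real k * \<mu>) - h x\<bar> \<le> K * exp (-c * x) * (\<Sum>j<k. q ^ j)" for k
  proof (induction k)
    case (Suc k)
    have "\<bar>h (x + real (Suc k) * \<mu>) - h (x + real k * \<mu>)\<bar> \<le> K * exp (-c * x) * q ^ k"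
      unfolding q_def using assms by (intro shift_orbit_increment[OF _ step]) auto
    with Suc show ?case
      by (simp add: algebra_simps abs_le_iff)
  qed simp
  have "(\<Sum>j<k. q ^ j) \<le> 1 / (1 - q)"
    using q by (simp add: sum_gp_strict divide_right_mono)
  from mult_left_mono[OF this A] partial[of k] show ?thesis
    by (simp add: q_def)
qed

lemma shift_orbit_convergent:
  fixes h :: "real \<Rightarrow> real"
  assumes "\<mu> > 0" "c > 0"
    and step: "\<And>x. x \<ge> X0 \<Longrightarrow> \<bar>h (x + \<mu>) - h x\<bar> \<le> K * exp (-c * x)"
    and "x \<ge> X0"
  shows "convergent (\<lambda>k. h (x + real k * \<mu>))"
proof -
  define u where "u k = h (x + real k * \<mu>)" for k
  define q where "q = exp (-c * \<mu>)"
  have q: "0 < q" "q < 1"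
    using assms by (auto simp: q_def)
  have "summable (\<lambda>k. u (Suc k) - u k)"
  proof (rule summable_comparison_test')
    show "summable (\<lambda>k. K * exp (-c * x) * q ^ k)"
      using q by (intro summable_mult summable_geometric) auto
    show "norm (u (Suc k) - u k) \<le> K * exp (-c * x) * q ^ k" for k
      using shift_orbit_increment[OF less_imp_le[OF \<open>\<mu> > 0\<close>] step \<open>x \<ge> X0\<close>]
      by (simp add: u_def q_def)
  qed
  then have "convergent (\<lambda>n. u n - u 0)"
    by (simp add: summable_iff_convergent sum_lessThan_telescope)
  then have "convergent (\<lambda>n. (u n - u 0) + u 0)"
    by (intro convergent_add convergent_const)
  then show ?thesis
    by (simp add: u_def)
qed

definition shift_limit :: "(real \<Rightarrow> real) \<Rightarrow> real \<Rightarrow> real \<Rightarrow> real" where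
  "shift_limit h \<mu> x = lim (\<lambda>k. h (x + real k * \<mu>))"

lemma shift_limit_periodic:
  assumes "convergent (\<lambda>k. h (x + real k * \<mu>))"
  shows "shift_limit h \<mu> (x + \<mu>) = shift_limit h \<mu> x"
proof -
  have "(\<lambda>k. h (x + real (Suc k) * \<mu>)) \<longlonglongrightarrow> shift_limit h \<mu> x"
    using assms unfolding shift_limit_def convergent_LIMSEQ_iff by (rule LIMSEQ_Suc)
  then have "(\<lambda>k. h (x + \<mu> + real k * \<mu>)) \<longlonglongrightarrow> shift_limit h \<mu> x"
    by (simp add: algebra_simps)
  then show ?thesis
    unfolding shift_limit_def by (rule limI)
qed

lemma shift_limit_approx:
  fixes h :: "real \<Rightarrow> real"
  assumes "\<mu> > 0" "c > 0"
    and step: "\<And>x. x \<ge> X0 \<Longrightarrow> \<bar>h (x + \<mu>) - h x\<bar> \<le> K * exp (-c * x)"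
    and "x \<ge> X0"
  shows "\<bar>h x - shift_limit h \<mu> x\<bar> \<le> K / (1 - exp (-c * \<mu>)) * exp (-c * x)"
proof -
  have "(\<lambda>k. h (x + real k * \<mu>)) \<longlonglongrightarrow> shift_limit h \<mu> x"
    using shift_orbit_convergent[OF assms] unfolding shift_limit_def convergent_LIMSEQ_iff .
  then have "(\<lambda>k. \<bar>h (x + real k * \<mu>) - h x\<bar>) \<longlonglongrightarrow> \<bar>shift_limit h \<mu> x - h x\<bar>"
    by (intro tendsto_intros)
  moreover have "\<bar>h (x + real k * \<mu>) - h x\<bar> \<le> K * exp (-c * x) / (1 - exp (-c * \<mu>))" for k
    by (rule shift_orbit_bound[OF assms])
  ultimately have "\<bar>shift_limit h \<mu> x - h x\<bar> \<le> K * exp (-c * x) / (1 - exp (-c * \<mu>))"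
    by (intro LIMSEQ_le_const2) auto
  then show ?thesis
    by (simp add: abs_minus_commute)
qed

lemma shift_limit_shift:
  fixes h :: "real \<Rightarrow> real"
  assumes "\<mu> > 0" "c > 0" "\<mu>' \<ge> 0"
    and step: "\<And>x. x \<ge> X0 \<Longrightarrow> \<bar>h (x + \<mu>) - h x\<bar> \<le> K * exp (-c * x)"
    and step': "\<And>x. x \<ge> X0 \<Longrightarrow> \<bar>h (x + \<mu>') - h x - \<beta>\<bar> \<le> K' * exp (-c * x)"
    and "x \<ge> X0"
  shows "shift_limit h \<mu> (x + \<mu>') = shift_limit h \<mu> x + \<beta>"
proof -
  define d where "d k = h (x + \<mu>' + real k * \<mu>) - h (x + real k * \<mu>)" for k
  have lim: "(\<lambda>k. h (y + real k * \<mu>)) \<longlonglongrightarrow> shift_limit h \<mu> y" if "y \<ge> X0" for y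
    using shift_orbit_convergent[OF assms(1,2) step that]
    unfolding shift_limit_def convergent_LIMSEQ_iff .
  have "d \<longlonglongrightarrow> shift_limit h \<mu> (x + \<mu>') - shift_limit h \<mu> x"
    unfolding d_def using assms by (intro tendsto_diff lim) auto
  moreover have "d \<longlonglongrightarrow> \<beta>"
  proof -
    have bound: "norm (d k - \<beta>) \<le> K' * exp (-c * x) * exp (-c * \<mu>) ^ k" for k
    proof -
      have shift: "x + \<mu>' + real k * \<mu> = x + real k * \<mu> + \<mu>'"
        by simp
      have "x + real k * \<mu> \<ge> X0"
        using assms by (simp add: add_increasing2)
      from step'[OF this] show ?thesis
        unfolding d_def real_norm_def by (simp only: shift exp_shift_geometric mult.assoc)
    qed
    have "eventually (\<lambda>k. norm (d k - \<beta>) \<le> K' * exp (-c * x) * exp (-c * \<mu>) ^ k) sequentially"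
      using bound by (intro always_eventually allI)
    moreover have "(\<lambda>k. K' * exp (-c * x) * exp (-c * \<mu>) ^ k) \<longlonglongrightarrow> 0"
      using assms by (intro tendsto_mult_right_zero LIMSEQ_power_zero) auto
    ultimately have "(\<lambda>k. d k - \<beta>) \<longlonglongrightarrow> 0"
      by (rule Lim_null_comparison)
    then show ?thesis
      by (simp add: LIM_zero_iff)
  qed
  ultimately have "shift_limit h \<mu> (x + \<mu>') - shift_limit h \<mu> x = \<beta>"
    by (rule LIMSEQ_unique)
  then show ?thesis
    by simp
qed

section \<open>Slowly decreasing functions\<close>

definition slowly_decreasing :: "(real \<Rightarrow> real) \<Rightarrow> bool" where
  "slowly_decreasing f \<longleftrightarrow>
     (\<forall>\<eta>>0. \<exists>\<delta>>0. \<exists>X. \<forall>s t. X \<le> s \<longrightarrow> s \<le> t \<longrightarrow> t \<le> s + \<delta> \<longrightarrow> f s - \<eta> \<le> f t)"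

lemma slowly_decreasingD:
  assumes "slowly_decreasing f" "\<eta> > 0"
  obtains \<delta> X where "\<delta> > 0" "\<And>s t. X \<le> s \<Longrightarrow> s \<le> t \<Longrightarrow> t \<le> s + \<delta> \<Longrightarrow> f s - \<eta> \<le> f t"
  using assms unfolding slowly_decreasing_def by metis

lemma slowly_decreasing_minus_linear:
  assumes "slowly_decreasing f"
  shows "slowly_decreasing (\<lambda>x. f x - \<alpha> * x)"
  unfolding slowly_decreasing_def
proof (intro allI impI)
  fix \<eta> :: real
  assume "\<eta> > 0"
  then obtain \<delta> X where "\<delta> > 0"
    and mono: "\<And>s t. X \<le> s \<Longrightarrow> s \<le> t \<Longrightarrow> t \<le> s + \<delta> \<Longrightarrow> f s - \<eta> / 2 \<le> f t"
    using slowly_decreasingD[OF assms, of "\<eta> / 2"] by auto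
  define \<delta>' where "\<delta>' = min \<delta> (\<eta> / (2 * (\<bar>\<alpha>\<bar> + 1)))"
  have "\<delta>' > 0"
    using \<open>\<delta> > 0\<close> \<open>\<eta> > 0\<close> by (simp add: \<delta>'_def)
  have "\<bar>\<alpha>\<bar> * \<delta>' \<le> (\<bar>\<alpha>\<bar> + 1) * (\<eta> / (2 * (\<bar>\<alpha>\<bar> + 1)))"
    using \<open>\<delta>' > 0\<close> by (intro mult_mono) (auto simp: \<delta>'_def)
  also have "\<dots> = \<eta> / 2"
    by (simp add: field_simps add_nonneg_pos)
  finally have small: "\<bar>\<alpha>\<bar> * \<delta>' \<le> \<eta> / 2" .
  have "(f s - \<alpha> * s) - \<eta> \<le> f t - \<alpha> * t" if "X \<le> s" "s \<le> t" "t \<le> s + \<delta>'" for s t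
  proof -
    have "\<alpha> * (t - s) \<le> \<bar>\<alpha>\<bar> * (t - s)"
      using that by (intro mult_right_mono) auto
    also have "\<dots> \<le> \<bar>\<alpha>\<bar> * \<delta>'"
      using that by (intro mult_left_mono) auto
    finally have "\<alpha> * (t - s) \<le> \<eta> / 2"
      using small by linarith
    moreover have "f s - \<eta> / 2 \<le> f t"
      using that by (intro mono) (auto simp: \<delta>'_def)
    ultimately show ?thesis
      by (simp add: algebra_simps)
  qed
  with \<open>\<delta>' > 0\<close> show "\<exists>\<delta>>0. \<exists>X. \<forall>s t. X \<le> s \<longrightarrow> s \<le> t \<longrightarrow> t \<le> s + \<delta> \<longrightarrow>
      (f s - \<alpha> * s) - \<eta> \<le> f t - \<alpha> * t"
    by blast
qed

lemma slowly_decreasing_drop_bound: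
  assumes "slowly_decreasing f"
  obtains X \<delta> where "\<delta> > 0" "\<And>s t. X \<le> s \<Longrightarrow> s \<le> t \<Longrightarrow> f s - (t - s) / \<delta> - 1 \<le> f t"
proof -
  obtain \<delta> X where "\<delta> > 0"
    and step: "\<And>s t. X \<le> s \<Longrightarrow> s \<le> t \<Longrightarrow> t \<le> s + \<delta> \<Longrightarrow> f s - 1 \<le> f t"
    using slowly_decreasingD[OF assms, of 1] by auto
  have chain: "f s - real n \<le> f t" if "X \<le> s" "s \<le> t" "t \<le> s + real n * \<delta>" for n s t
    using that
  proof (induction n arbitrary: t)
    case (Suc n)
    show ?case
    proof (cases "t \<le> s + real n * \<delta>")
      case True
      with Suc show ?thesis by fastforce
    next
      case False
      have "0 \<le> real n * \<delta>"
        using \<open>\<delta> > 0\<close> by simp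
      have "t \<le> s + real n * \<delta> + \<delta>"
        using Suc.prems(3) by (simp add: algebra_simps)
      then have "f (s + real n * \<delta>) - 1 \<le> f t"
        using Suc.prems False \<open>0 \<le> real n * \<delta>\<close> by (intro step) linarith+
      moreover have "f s - real n \<le> f (s + real n * \<delta>)"
        using Suc \<open>0 \<le> real n * \<delta>\<close> by (intro Suc.IH) auto
      ultimately show ?thesis
        by simp
    qed
  qed simp
  have "f s - (t - s) / \<delta> - 1 \<le> f t" if st: "X \<le> s" "s \<le> t" for s t
  proof -
    obtain j where j: "real j * \<delta> \<le> t - s" "t - s < real j * \<delta> + \<delta>"
      by (rule nat_multiple_bracket[OF \<open>\<delta> > 0\<close>, of "t - s"]) (use st in simp)
    have "f s - real (Suc j) \<le> f t"
      using st j by (intro chain) (auto simp: algebra_simps)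
    moreover have "real j \<le> (t - s) / \<delta>"
      using j(1) \<open>\<delta> > 0\<close> by (simp add: pos_le_divide_eq)
    ultimately show ?thesis
      by simp
  qed
  with \<open>\<delta> > 0\<close> show thesis
    by (rule that)
qed

lemma slowly_decreasing_drift_mono:
  assumes "slowly_decreasing f" "\<mu> > 0"
    and drift: "\<And>y k. y \<ge> X0 \<Longrightarrow> \<bar>f (y + real k * \<mu>) - f y - real k * \<sigma> y\<bar> \<le> E y"
    and "X0 \<le> y1" "y1 \<le> y2"
  shows "\<sigma> y1 \<le> \<sigma> y2"
proof (rule ccontr)
  assume "\<not> \<sigma> y1 \<le> \<sigma> y2"
  then have d: "\<sigma> y1 - \<sigma> y2 > 0"
    by simp
  obtain X \<delta> where "\<delta> > 0"
    and drop: "\<And>s t. X \<le> s \<Longrightarrow> s \<le> t \<Longrightarrow> f s - (t - s) / \<delta> - 1 \<le> f t"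
    using slowly_decreasing_drop_bound[OF assms(1)] by metis
  define B where "B = f y2 - f y1 + E y1 + E y2 + (y2 - y1) / \<delta> + 1"
  obtain k :: nat where k: "max (B / (\<sigma> y1 - \<sigma> y2)) ((X - y1) / \<mu>) + 1 \<le> real k"
    by (meson real_arch_simple)
  have "B / (\<sigma> y1 - \<sigma> y2) < real k" "(X - y1) / \<mu> < real k"
    using k max.cobounded1 max.cobounded2 by (fastforce intro: le_less_trans)+
  then have large: "B < real k * (\<sigma> y1 - \<sigma> y2)" "X \<le> y1 + real k * \<mu>"
    using d \<open>\<mu> > 0\<close> by (simp_all add: pos_divide_less_eq algebra_simps)
  have "f (y1 + real k * \<mu>) - (y2 - y1) / \<delta> - 1 \<le> f (y2 + real k * \<mu>)"
    using drop[of "y1 + real k * \<mu>" "y2 + real k * \<mu>"] large(2) \<open>y1 \<le> y2\<close> by simp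
  moreover have "\<bar>f (y1 + real k * \<mu>) - f y1 - real k * \<sigma> y1\<bar> \<le> E y1"
    "\<bar>f (y2 + real k * \<mu>) - f y2 - real k * \<sigma> y2\<bar> \<le> E y2"
    using assms by (auto intro: drift)
  ultimately show False
    using large(1) by (simp add: B_def abs_le_iff algebra_simps)
qed

lemma LIMSEQ_shift_slowly_decreasing:
  fixes g P :: "real \<Rightarrow> real"
  assumes "slowly_decreasing g" "\<mu> > 0" "\<eta> > 0"
    and lim: "\<And>x. x \<ge> X0 \<Longrightarrow> (\<lambda>k. g (x + real k * \<mu>)) \<longlonglongrightarrow> P x"
  shows "\<exists>\<delta>>0. \<forall>s t. X0 \<le> s \<longrightarrow> s \<le> t \<longrightarrow> t \<le> s + \<delta> \<longrightarrow> P s - \<eta> \<le> P t"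
proof -
  obtain \<delta> X where "\<delta> > 0"
    and mono: "\<And>s t. X \<le> s \<Longrightarrow> s \<le> t \<Longrightarrow> t \<le> s + \<delta> \<Longrightarrow> g s - \<eta> \<le> g t"
    using slowly_decreasingD[OF assms(1,3)] by metis
  have "P s - \<eta> \<le> P t" if st: "X0 \<le> s" "s \<le> t" "t \<le> s + \<delta>" for s t
  proof -
    have "(\<lambda>k. g (t + real k * \<mu>) - g (s + real k * \<mu>)) \<longlonglongrightarrow> P t - P s"
      using st by (intro tendsto_diff lim) auto
    moreover obtain N :: nat where "(X - s) / \<mu> \<le> real N"
      by (meson real_arch_simple)
    then have "\<forall>k\<ge>N. - \<eta> \<le> g (t + real k * \<mu>) - g (s + real k * \<mu>)"
    proof (intro allI impI)
      fix k assume "k \<ge> N"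
      have "X - s \<le> real N * \<mu>"
        using \<open>(X - s) / \<mu> \<le> real N\<close> \<open>\<mu> > 0\<close> by (simp add: pos_divide_le_eq)
      also have "\<dots> \<le> real k * \<mu>"
        using \<open>k \<ge> N\<close> \<open>\<mu> > 0\<close> by (intro mult_right_mono) auto
      finally show "- \<eta> \<le> g (t + real k * \<mu>) - g (s + real k * \<mu>)"
        using mono[of "s + real k * \<mu>" "t + real k * \<mu>"] st by simp
    qed
    ultimately have "- \<eta> \<le> P t - P s"
      by (intro LIMSEQ_le_const) auto
    then show ?thesis
      by simp
  qed
  with \<open>\<delta> > 0\<close> show ?thesis
    by blast
qed

section \<open>Periodic functions with an incommensurable drift\<close>

lemma periodic_mono_imp_const:
  fixes P :: "real \<Rightarrow> real"
  assumes "\<mu> > 0" and per: "\<And>x. x \<ge> X0 \<Longrightarrow> P (x + \<mu>) = P x"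
    and mono: "\<And>s t. X0 \<le> s \<Longrightarrow> s \<le> t \<Longrightarrow> P s \<le> P t" and "x \<ge> X0"
  shows "P x = P X0"
proof -
  obtain N :: nat where "(x - X0) / \<mu> \<le> real N"
    by (meson real_arch_simple)
  then have "x \<le> X0 + real N * \<mu>"
    using \<open>\<mu> > 0\<close> by (simp add: pos_divide_le_eq algebra_simps)
  moreover have "P (X0 + real N * \<mu>) = P X0"
    using shift_iterate[of \<mu> X0 P 0 X0 N] per \<open>\<mu> > 0\<close> by simp
  ultimately show ?thesis
    using mono[of X0 x] mono[of x "X0 + real N * \<mu>"] \<open>x \<ge> X0\<close> by simp
qed

lemma periodic_shift_increment_small:
  fixes P :: "real \<Rightarrow> real"
  assumes "\<mu> > 0" and per: "\<And>x. x \<ge> X0 \<Longrightarrow> P (x + \<mu>) = P x"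
    and mono: "\<And>s t. X0 \<le> s \<Longrightarrow> s \<le> t \<Longrightarrow> t \<le> s + \<delta> \<Longrightarrow> P s - \<eta> \<le> P t"
    and "0 < \<tau>" "\<tau> < \<delta>" "\<tau> < \<mu>" and shift: "\<And>x. x \<ge> X0 \<Longrightarrow> P (x + \<tau>) = P x + \<gamma>"
  shows "\<bar>\<gamma>\<bar> \<le> \<eta>"
proof -
  have "- \<eta> \<le> \<gamma>"
    using mono[of X0 "X0 + \<tau>"] shift[of X0] assms by simp
  obtain j :: nat where j: "real j * \<tau> \<le> \<mu>" "\<mu> < real j * \<tau> + \<tau>"
    using nat_multiple_bracket[OF \<open>\<tau> > 0\<close>, of \<mu>] \<open>\<mu> > 0\<close> by auto
  have "j \<noteq> 0"
    using j(2) \<open>\<tau> < \<mu>\<close> by (cases j) auto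
  have "P (X0 + real j * \<tau>) = P X0 + real j * \<gamma>"
    using shift_iterate[of \<tau> X0 P \<gamma> X0 j] shift \<open>\<tau> > 0\<close> by simp
  moreover have "P (X0 + real j * \<tau>) - \<eta> \<le> P (X0 + \<mu>)"
    using j \<open>\<tau> < \<delta>\<close> \<open>\<tau> > 0\<close> by (intro mono) auto
  moreover have "P (X0 + \<mu>) = P X0"
    by (rule per) simp
  ultimately have "real j * \<gamma> \<le> \<eta>"
    by simp
  have "\<gamma> \<le> \<eta>"
  proof (cases "\<gamma> > 0")
    case True
    have "1 * \<gamma> \<le> real j * \<gamma>"
      using \<open>j \<noteq> 0\<close> True by (intro mult_right_mono) auto
    with \<open>real j * \<gamma> \<le> \<eta>\<close> show ?thesis
      by simp
  next
    case False
    with \<open>- \<eta> \<le> \<gamma>\<close> show ?thesis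
      by simp
  qed
  with \<open>- \<eta> \<le> \<gamma>\<close> show ?thesis
    by simp
qed

lemma invariant_small_shifts_imp_mono:
  fixes P :: "real \<Rightarrow> real"
  assumes mono: "\<And>\<eta>. \<eta> > 0 \<Longrightarrow> \<exists>\<delta>>0. \<forall>s t. X0 \<le> s \<longrightarrow> s \<le> t \<longrightarrow> t \<le> s + \<delta> \<longrightarrow> P s - \<eta> \<le> P t"
    and inv: "\<And>\<delta>. \<delta> > 0 \<Longrightarrow> \<exists>\<tau>. 0 < \<tau> \<and> \<tau> < \<delta> \<and> (\<forall>x\<ge>X0. P (x + \<tau>) = P x)"
    and "X0 \<le> s" "s \<le> t"
  shows "P s \<le> P t"
proof (rule field_le_epsilon)
  fix \<eta> :: real
  assume "\<eta> > 0"
  then obtain \<delta> where "\<delta> > 0"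
    and mono\<delta>: "\<forall>s t. X0 \<le> s \<longrightarrow> s \<le> t \<longrightarrow> t \<le> s + \<delta> \<longrightarrow> P s - \<eta> \<le> P t"
    using mono by blast
  then obtain \<tau> where "0 < \<tau>" "\<tau> < \<delta>" and \<tau>: "\<And>x. x \<ge> X0 \<Longrightarrow> P (x + \<tau>) = P x"
    using inv by blast
  obtain j :: nat where j: "real j * \<tau> \<le> t - s" "t - s < real j * \<tau> + \<tau>"
    by (rule nat_multiple_bracket[OF \<open>0 < \<tau>\<close>, of "t - s"]) (use \<open>s \<le> t\<close> in simp)
  have "P (s + real j * \<tau>) = P s"
    using shift_iterate[of \<tau> X0 P 0 s j] \<tau> \<open>0 < \<tau>\<close> \<open>X0 \<le> s\<close> by simp
  moreover have "P (s + real j * \<tau>) - \<eta> \<le> P t"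
    using mono\<delta> j \<open>\<tau> < \<delta>\<close> \<open>0 < \<tau>\<close> \<open>X0 \<le> s\<close> by (simp add: add_increasing2)
  ultimately show "P s \<le> P t + \<eta>"
    by simp
qed

lemma incommensurable_small_combination:
  fixes \<mu> \<mu>' :: real
  assumes "\<mu> > 0" "\<mu>' > 0" "\<delta> > 0"
    and incomm: "\<And>a b :: nat. b > 0 \<Longrightarrow> real b * \<mu>' \<noteq> real a * \<mu>"
  obtains a b :: nat where "b > 0" "0 < \<bar>real b * \<mu>' - real a * \<mu>\<bar>" "\<bar>real b * \<mu>' - real a * \<mu>\<bar> < \<delta>"
proof -
  obtain N :: nat where "N > 0" "inverse (real N) < \<delta> / \<mu>"
    using ex_inverse_of_nat_less[of "\<delta> / \<mu>"] assms by auto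
  then obtain h k where "0 < k" and hk: "\<bar>of_int k * (\<mu>' / \<mu>) - of_int h\<bar> < 1 / real N"
    using Dirichlet_approx by metis
  have "0 < of_int k * (\<mu>' / \<mu>)"
    using \<open>0 < k\<close> assms by simp
  moreover have "1 / real N \<le> 1"
    using \<open>N > 0\<close> by simp
  ultimately have "h \<ge> 0"
    using hk by (auto simp: abs_less_iff)
  define a b where "a = nat h" and "b = nat k"
  have "real b * \<mu>' - real a * \<mu> = \<mu> * (of_int k * (\<mu>' / \<mu>) - of_int h)"
    using \<open>h \<ge> 0\<close> \<open>0 < k\<close> \<open>\<mu> > 0\<close> by (simp add: a_def b_def field_simps)
  then have "\<bar>real b * \<mu>' - real a * \<mu>\<bar> < \<mu> * (1 / real N)"
    using mult_strict_left_mono[OF hk \<open>\<mu> > 0\<close>] \<open>\<mu> > 0\<close> by (simp add: abs_mult)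
  also have "\<dots> < \<delta>"
    using \<open>inverse (real N) < \<delta> / \<mu>\<close> \<open>\<mu> > 0\<close> by (simp add: field_simps)
  finally have "\<bar>real b * \<mu>' - real a * \<mu>\<bar> < \<delta>" .
  moreover have "b > 0"
    using \<open>0 < k\<close> by (simp add: b_def)
  moreover have "0 < \<bar>real b * \<mu>' - real a * \<mu>\<bar>"
    using incomm[OF \<open>b > 0\<close>, of a] by simp
  ultimately show thesis
    using that by blast
qed

lemma incommensurable_small_shift:
  fixes P :: "real \<Rightarrow> real"
  assumes "\<mu> > 0" "\<mu>' > 0" "\<delta> > 0"
    and incomm: "\<And>a b :: nat. b > 0 \<Longrightarrow> real b * \<mu>' \<noteq> real a * \<mu>"
    and per: "\<And>x. x \<ge> X0 \<Longrightarrow> P (x + \<mu>) = P x"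
    and drift: "\<And>x. x \<ge> X0 \<Longrightarrow> P (x + \<mu>') = P x + \<beta>"
  obtains \<tau> and z :: int
    where "0 < \<tau>" "\<tau> < \<delta>" "z \<noteq> 0" "\<And>x. x \<ge> X0 \<Longrightarrow> P (x + \<tau>) = P x + of_int z * \<beta>"
proof -
  obtain a b :: nat where "b > 0" and ab: "0 < \<bar>real b * \<mu>' - real a * \<mu>\<bar>" "\<bar>real b * \<mu>' - real a * \<mu>\<bar> < \<delta>"
    using incommensurable_small_combination[OF assms(1-4)] by metis
  have combine: "P v = P u + real b * \<beta>"
    if "u \<ge> X0" "v \<ge> X0" "u + real b * \<mu>' = v + real a * \<mu>" for u v
  proof -
    have "P (u + real b * \<mu>') = P u + real b * \<beta>"
      using shift_iterate[of \<mu>' X0 P \<beta> u b] drift \<open>\<mu>' > 0\<close> that by simp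
    moreover have "P (v + real a * \<mu>) = P v"
      using shift_iterate[of \<mu> X0 P 0 v a] per \<open>\<mu> > 0\<close> that by simp
    ultimately show ?thesis
      using that by simp
  qed
  consider "real b * \<mu>' - real a * \<mu> > 0" | "real b * \<mu>' - real a * \<mu> < 0"
    using ab(1) by linarith
  then show thesis
  proof cases
    case 1
    define \<tau> where "\<tau> = real b * \<mu>' - real a * \<mu>"
    have "P (x + \<tau>) = P x + of_int (int b) * \<beta>" if "x \<ge> X0" for x
      using combine[of x "x + \<tau>"] that 1 by (simp add: \<tau>_def)
    with 1 ab \<open>b > 0\<close> show thesis
      by (intro that[of \<tau> "int b"]) (auto simp: \<tau>_def)
  next
    case 2
    define \<tau> where "\<tau> = real a * \<mu> - real b * \<mu>'"
    have "P (x + \<tau>) = P x + of_int (- int b) * \<beta>" if "x \<ge> X0" for x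
      using combine[of "x + \<tau>" x] that 2 by (simp add: \<tau>_def)
    with 2 ab \<open>b > 0\<close> show thesis
      by (intro that[of \<tau> "- int b"]) (auto simp: \<tau>_def)
  qed
qed

lemma periodic_incommensurable_drift_const:
  fixes P :: "real \<Rightarrow> real"
  assumes "\<mu> > 0" "\<mu>' > 0"
    and incomm: "\<And>a b :: nat. b > 0 \<Longrightarrow> real b * \<mu>' \<noteq> real a * \<mu>"
    and per: "\<And>x. x \<ge> X0 \<Longrightarrow> P (x + \<mu>) = P x"
    and drift: "\<And>x. x \<ge> X0 \<Longrightarrow> P (x + \<mu>') = P x + \<beta>"
    and mono: "\<And>\<eta>. \<eta> > 0 \<Longrightarrow> \<exists>\<delta>>0. \<forall>s t. X0 \<le> s \<longrightarrow> s \<le> t \<longrightarrow> t \<le> s + \<delta> \<longrightarrow> P s - \<eta> \<le> P t"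
    and "x \<ge> X0"
  shows "P x = P X0"
proof -
  have "\<beta> = 0"
  proof (rule ccontr)
    assume "\<beta> \<noteq> 0"
    then obtain \<delta> where "\<delta> > 0"
      and mono\<delta>: "\<And>s t. X0 \<le> s \<Longrightarrow> s \<le> t \<Longrightarrow> t \<le> s + \<delta> \<Longrightarrow> P s - \<bar>\<beta>\<bar> / 2 \<le> P t"
      using mono[of "\<bar>\<beta>\<bar> / 2"] by auto
    obtain \<tau> and z :: int where "0 < \<tau>" "\<tau> < min \<delta> \<mu>" "z \<noteq> 0"
      and shift: "\<And>x. x \<ge> X0 \<Longrightarrow> P (x + \<tau>) = P x + of_int z * \<beta>"
      using incommensurable_small_shift[OF assms(1,2) _ incomm per drift, of "min \<delta> \<mu>"]
        \<open>\<delta> > 0\<close> \<open>\<mu> > 0\<close> by auto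
    have "\<bar>of_int z * \<beta>\<bar> \<le> \<bar>\<beta>\<bar> / 2"
    proof (rule periodic_shift_increment_small[of \<mu> X0 P \<delta> "\<bar>\<beta>\<bar> / 2" \<tau> "of_int z * \<beta>"])
      show "\<tau> < \<delta>" "\<tau> < \<mu>"
        using \<open>\<tau> < min \<delta> \<mu>\<close> by auto
    qed (fact assms(1) per mono\<delta> \<open>0 < \<tau>\<close> shift)+
    moreover have "1 * \<bar>\<beta>\<bar> \<le> \<bar>of_int z\<bar> * \<bar>\<beta>\<bar>"
      using \<open>z \<noteq> 0\<close> by (intro mult_right_mono) auto
    ultimately show False
      using \<open>\<beta> \<noteq> 0\<close> by (simp add: abs_mult)
  qed
  have invariant: "\<exists>\<tau>. 0 < \<tau> \<and> \<tau> < \<delta> \<and> (\<forall>x\<ge>X0. P (x + \<tau>) = P x)" if "\<delta> > 0" for \<delta>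
  proof -
    obtain \<tau> and z :: int where "0 < \<tau>" "\<tau> < \<delta>" "z \<noteq> 0"
      and "\<And>x. x \<ge> X0 \<Longrightarrow> P (x + \<tau>) = P x + of_int z * \<beta>"
      using incommensurable_small_shift[OF assms(1,2) \<open>\<delta> > 0\<close> incomm per drift] by metis
    with \<open>\<beta> = 0\<close> show ?thesis
      by auto
  qed
  have "P s \<le> P t" if "X0 \<le> s" "s \<le> t" for s t
    using invariant_small_shifts_imp_mono[OF mono invariant that] .
  from periodic_mono_imp_const[where P = P, OF assms(1) per this \<open>x \<ge> X0\<close>] show ?thesis .
qed

section \<open>Asymptotics from first and second differences\<close>

lemma first_difference_asymptotics:
  fixes f :: "real \<Rightarrow> real"
  assumes "\<mu> > 0" "c > 0" "slowly_decreasing f"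
    and second: "\<And>x. x \<ge> X0 \<Longrightarrow> \<bar>f (x + 2 * \<mu>) - 2 * f (x + \<mu>) + f x\<bar> \<le> K * exp (-c * x)"
  shows "\<exists>L M. \<forall>x\<ge>X0. \<bar>f (x + \<mu>) - f x - L\<bar> \<le> M * exp (-c * x)"
proof -
  define D where "D x = f (x + \<mu>) - f x" for x
  define \<sigma> where "\<sigma> = shift_limit D \<mu>"
  define M where "M = K / (1 - exp (-c * \<mu>))"
  have stepD: "\<bar>D (x + \<mu>) - D x\<bar> \<le> K * exp (-c * x)" if "x \<ge> X0" for x
  proof -
    have "D (x + \<mu>) - D x = f (x + 2 * \<mu>) - 2 * f (x + \<mu>) + f x"
      by (simp add: D_def add.assoc flip: mult_2)
    with second[OF that] show ?thesis
      by simp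
  qed
  have approx: "\<bar>D x - \<sigma> x\<bar> \<le> M * exp (-c * x)" if "x \<ge> X0" for x
    unfolding \<sigma>_def M_def using assms(1,2) stepD that by (rule shift_limit_approx)
  have per: "\<sigma> (x + \<mu>) = \<sigma> x" if "x \<ge> X0" for x
    unfolding \<sigma>_def using assms(1,2) stepD that by (intro shift_limit_periodic shift_orbit_convergent)
  \<comment> \<open>As \<sigma> is \<mu>-periodic, the first differences of h are D - \<sigma>, so they telescope.\<close>
  define h where "h x = f x - x * \<sigma> x / \<mu>" for x
  have stepH: "\<bar>h (x + \<mu>) - h x\<bar> \<le> M * exp (-c * x)" if "x \<ge> X0" for x
  proof -
    have "h (x + \<mu>) - h x = D x - \<sigma> x"
      using per[OF that] \<open>\<mu> > 0\<close> by (simp add: h_def D_def field_simps)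
    with approx[OF that] show ?thesis
      by simp
  qed
  have drift: "\<bar>f (y + real k * \<mu>) - f y - real k * \<sigma> y\<bar>
      \<le> M * exp (-c * y) / (1 - exp (-c * \<mu>))" if "y \<ge> X0" for y k
  proof -
    have "\<sigma> (y + real k * \<mu>) = \<sigma> y"
      using shift_iterate[of \<mu> X0 \<sigma> 0 y k] per \<open>\<mu> > 0\<close> that by simp
    moreover have "(y + real k * \<mu>) * \<sigma> y / \<mu> = y * \<sigma> y / \<mu> + real k * \<sigma> y"
      using \<open>\<mu> > 0\<close> by (simp add: field_simps)
    ultimately have "h (y + real k * \<mu>) - h y = f (y + real k * \<mu>) - f y - real k * \<sigma> y"
      by (simp add: h_def)
    with shift_orbit_bound[OF assms(1,2) stepH that, of k] show ?thesis
      by simp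
  qed
  have const: "\<sigma> x = \<sigma> X0" if "x \<ge> X0" for x
    using assms(1) per slowly_decreasing_drift_mono[OF assms(3,1) drift] that
    by (rule periodic_mono_imp_const)
  have "\<bar>f (x + \<mu>) - f x - \<sigma> X0\<bar> \<le> M * exp (-c * x)" if "x \<ge> X0" for x
    using approx[OF that] const[OF that] by (simp add: D_def)
  then show ?thesis
    by blast
qed

lemma incommensurable_differences_imp_linear:
  fixes f :: "real \<Rightarrow> real"
  assumes "\<mu> > 0" "\<mu>' > 0" "c > 0"
    and incomm: "\<And>a b :: nat. b > 0 \<Longrightarrow> real b * \<mu>' \<noteq> real a * \<mu>"
    and "slowly_decreasing f"
    and diff: "\<And>x. x \<ge> X0 \<Longrightarrow> \<bar>f (x + \<mu>) - f x - L\<bar> \<le> K * exp (-c * x)"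
    and diff': "\<And>x. x \<ge> X0 \<Longrightarrow> \<bar>f (x + \<mu>') - f x - L'\<bar> \<le> K' * exp (-c * x)"
  shows "\<exists>\<alpha> B M. \<forall>x\<ge>X0. \<bar>f x - \<alpha> * x - B\<bar> \<le> M * exp (-c * x)"
proof -
  define \<alpha> where "\<alpha> = L / \<mu>"
  define g where "g x = f x - \<alpha> * x" for x
  define P where "P = shift_limit g \<mu>"
  have "\<alpha> * \<mu> = L"
    using \<open>\<mu> > 0\<close> by (simp add: \<alpha>_def)
  have step: "\<bar>g (x + \<mu>) - g x\<bar> \<le> K * exp (-c * x)" if "x \<ge> X0" for x
  proof -
    have "g (x + \<mu>) - g x = f (x + \<mu>) - f x - \<alpha> * \<mu>"
      by (simp add: g_def algebra_simps)
    with diff[OF that] \<open>\<alpha> * \<mu> = L\<close> show ?thesis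
      by simp
  qed
  have step': "\<bar>g (x + \<mu>') - g x - (L' - \<alpha> * \<mu>')\<bar> \<le> K' * exp (-c * x)" if "x \<ge> X0" for x
  proof -
    have "g (x + \<mu>') - g x - (L' - \<alpha> * \<mu>') = f (x + \<mu>') - f x - L'"
      by (simp add: g_def algebra_simps)
    with diff'[OF that] show ?thesis
      by simp
  qed
  have lim: "(\<lambda>k. g (x + real k * \<mu>)) \<longlonglongrightarrow> P x" if "x \<ge> X0" for x
    using shift_orbit_convergent[OF assms(1,3) step that]
    unfolding P_def shift_limit_def convergent_LIMSEQ_iff .
  have per: "P (x + \<mu>) = P x" if "x \<ge> X0" for x
    unfolding P_def using shift_orbit_convergent[OF assms(1,3) step that] by (rule shift_limit_periodic)
  have drift: "P (x + \<mu>') = P x + (L' - \<alpha> * \<mu>')" if "x \<ge> X0" for x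
    unfolding P_def using assms(1,3) less_imp_le[OF \<open>\<mu>' > 0\<close>] step step' that by (rule shift_limit_shift)
  have mono: "\<exists>\<delta>>0. \<forall>s t. X0 \<le> s \<longrightarrow> s \<le> t \<longrightarrow> t \<le> s + \<delta> \<longrightarrow> P s - \<eta> \<le> P t" if "\<eta> > 0" for \<eta>
    using slowly_decreasing_minus_linear[OF assms(5)] \<open>\<mu> > 0\<close> that lim[unfolded g_def]
    by (rule LIMSEQ_shift_slowly_decreasing)
  have "P x = P X0" if "x \<ge> X0" for x
    using assms(1,2) incomm per drift mono that by (rule periodic_incommensurable_drift_const)
  moreover have "\<bar>g x - P x\<bar> \<le> K / (1 - exp (-c * \<mu>)) * exp (-c * x)" if "x \<ge> X0" for x
    unfolding P_def using assms(1,3) step that by (rule shift_limit_approx)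
  ultimately have "\<bar>f x - \<alpha> * x - P X0\<bar> \<le> K / (1 - exp (-c * \<mu>)) * exp (-c * x)" if "x \<ge> X0" for x
    using that unfolding g_def by metis
  then show ?thesis
    by blast
qed

section \<open>The sequence on a logarithmic scale\<close>

lemma abs_ln_one_plus_le:
  fixes e :: real
  assumes "\<bar>e\<bar> \<le> 1 / 2"
  shows "\<bar>ln (1 + e)\<bar> \<le> 2 * \<bar>e\<bar>"
proof -
  have "2 * e\<^sup>2 = 2 * \<bar>e\<bar> * \<bar>e\<bar>"
    by (simp add: power2_eq_square abs_mult_self_eq)
  also have "\<dots> \<le> 2 * \<bar>e\<bar> * (1 / 2)"
    using assms by (intro mult_left_mono) auto
  finally show ?thesis
    using abs_ln_one_plus_x_minus_x_bound[OF assms] by linarith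
qed

lemma abs_exp_minus_one_le:
  fixes r :: real
  assumes "\<bar>r\<bar> \<le> 1"
  shows "\<bar>exp r - 1\<bar> \<le> 2 * \<bar>r\<bar>"
proof (cases "r \<ge> 0")
  case True
  have "r\<^sup>2 \<le> r * 1"
    unfolding power2_eq_square using True assms by (intro mult_left_mono) auto
  moreover have "exp r \<le> 1 + r + r\<^sup>2"
    using True assms by (intro exp_bound) auto
  ultimately show ?thesis
    using True by simp
next
  case False
  then have "\<bar>exp r - 1\<bar> = 1 - exp r"
    by simp
  with exp_ge_add_one_self[of r] False show ?thesis
    by linarith
qed

lemma exp_decay_eventually_le:
  fixes c K \<epsilon> :: real
  assumes "c > 0" "\<epsilon> > 0"
  obtains X where "X \<ge> 0" "\<And>x. x \<ge> X \<Longrightarrow> K * exp (-c * x) \<le> \<epsilon>"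
proof
  define X where "X = \<bar>K\<bar> / (c * \<epsilon>)"
  show "X \<ge> 0"
    using assms by (simp add: X_def)
  show "K * exp (-c * x) \<le> \<epsilon>" if "x \<ge> X" for x
  proof -
    have "\<bar>K\<bar> \<le> \<epsilon> * (c * x)"
      using that assms by (simp add: X_def pos_divide_le_eq algebra_simps)
    also have "\<dots> \<le> \<epsilon> * exp (c * x)"
      using exp_ge_add_one_self[of "c * x"] assms by (intro mult_left_mono) linarith+
    finally have "\<bar>K\<bar> / exp (c * x) \<le> \<epsilon>"
      by (simp add: pos_divide_le_eq)
    moreover have "K * exp (-c * x) \<le> \<bar>K\<bar> / exp (c * x)"
      by (simp add: exp_minus divide_right_mono field_simps)
    ultimately show ?thesis
      by linarith
  qed
qed

lemma ln_second_difference_bound: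
  fixes a :: "real \<Rightarrow> real"
  assumes pos: "\<And>n. n \<ge> 1 \<Longrightarrow> a n > 0" and "m \<ge> 1"
    and ratio: "\<And>n. n \<ge> 1 \<Longrightarrow>
      \<exists>e. a (m^2 * n) / a (m * n) = (a (m * n) / a n) * (1 + e) \<and> \<bar>e\<bar> \<le> K * n powr (-c)"
    and "x \<ge> 0" "K * exp (-c * x) \<le> 1 / 2"
  shows "\<bar>ln (a (exp (x + 2 * ln m))) - 2 * ln (a (exp (x + ln m))) + ln (a (exp x))\<bar>
    \<le> 2 * K * exp (-c * x)"
proof -
  define n where "n = exp x"
  have "n \<ge> 1"
    using \<open>x \<ge> 0\<close> by (simp add: n_def)
  have "1 * 1 \<le> m * n" "1 * (1 * 1) \<le> m * (m * n)"
    using \<open>n \<ge> 1\<close> \<open>m \<ge> 1\<close> by (intro mult_mono; simp)+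
  then have "n \<ge> 1" "m * n \<ge> 1" "m^2 * n \<ge> 1"
    using \<open>n \<ge> 1\<close> by (simp_all add: power2_eq_square mult.assoc)
  then have a_pos: "a n > 0" "a (m * n) > 0" "a (m^2 * n) > 0"
    using pos by auto
  have exp1: "exp (x + ln m) = m * n"
    using \<open>m \<ge> 1\<close> by (simp add: n_def exp_add)
  have "exp (x + 2 * ln m) = exp ((x + ln m) + ln m)"
    by simp
  also have "\<dots> = m^2 * n"
    using \<open>m \<ge> 1\<close> by (simp only: exp_add[of "x + ln m" "ln m"] exp1) (simp add: power2_eq_square)
  finally have exps: "exp (x + ln m) = m * n" "exp (x + 2 * ln m) = m^2 * n"
    using exp1 by auto
  obtain e where e: "a (m^2 * n) / a (m * n) = (a (m * n) / a n) * (1 + e)" "\<bar>e\<bar> \<le> K * exp (-c * x)"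
    using ratio[OF \<open>n \<ge> 1\<close>] by (auto simp: n_def powr_def)
  have "0 < (a (m * n) / a n) * (1 + e)"
    using a_pos e(1)[symmetric] by simp
  then have "1 + e > 0"
    by (rule zero_less_mult_pos) (use a_pos in simp)
  have "ln (a (m^2 * n)) - 2 * ln (a (m * n)) + ln (a n) = ln (1 + e)"
    using arg_cong[OF e(1), of ln] a_pos \<open>1 + e > 0\<close> by (simp add: ln_div ln_mult)
  moreover have "\<bar>ln (1 + e)\<bar> \<le> 2 * \<bar>e\<bar>"
    using e(2) assms(5) by (intro abs_ln_one_plus_le) linarith
  ultimately show ?thesis
    using e(2) by (simp add: exps n_def)
qed

lemma liminf_ratio_bound:
  fixes a :: "real \<Rightarrow> real"
  assumes pos: "\<And>n. n \<ge> 1 \<Longrightarrow> a n > 0"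
    and liminf: "\<exists>L. ((\<lambda>\<epsilon>. Liminf at_top (\<lambda>n::real. ereal
                    (INF st \<in> {(s, t). n \<le> s \<and> s \<le> t \<and> t \<le> (1 + \<epsilon>) * n}. a (snd st) / a (fst st))))
                  \<longlongrightarrow> L) (at_right 0) \<and> L \<ge> 1"
    and "\<rho> < 1"
  obtains \<epsilon> N where "\<epsilon> > 0" "N \<ge> 1" "\<And>s t. N \<le> s \<Longrightarrow> s \<le> t \<Longrightarrow> t \<le> (1 + \<epsilon>) * s \<Longrightarrow> \<rho> < a t / a s"
proof -
  define I where "I \<epsilon> n = (INF st \<in> {(s, t). n \<le> s \<and> s \<le> t \<and> t \<le> (1 + \<epsilon>) * n}. a (snd st) / a (fst st))"
    for \<epsilon> n :: real
  obtain L where L: "((\<lambda>\<epsilon>. Liminf at_top (\<lambda>n. ereal (I \<epsilon> n))) \<longlongrightarrow> L) (at_right 0)" "L \<ge> 1"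
    using liminf unfolding I_def by blast
  have "ereal \<rho> < 1"
    using \<open>\<rho> < 1\<close> by (simp add: one_ereal_def)
  also have "\<dots> \<le> L"
    by (rule L(2))
  finally have "ereal \<rho> < L" .
  with L(1) have "eventually (\<lambda>\<epsilon>. ereal \<rho> < Liminf at_top (\<lambda>n. ereal (I \<epsilon> n))) (at_right 0)"
    by (rule order_tendstoD(1))
  then obtain b where "b > 0" and b: "\<And>\<epsilon>. 0 < \<epsilon> \<Longrightarrow> \<epsilon> < b \<Longrightarrow> ereal \<rho> < Liminf at_top (\<lambda>n. ereal (I \<epsilon> n))"
    unfolding eventually_at_right_field by auto
  define \<epsilon> where "\<epsilon> = b / 2"
  have "\<epsilon> > 0"
    using \<open>b > 0\<close> by (simp add: \<epsilon>_def)
  have "ereal \<rho> < Liminf at_top (\<lambda>n. ereal (I \<epsilon> n))"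
    using \<open>b > 0\<close> by (intro b) (auto simp: \<epsilon>_def)
  then have "eventually (\<lambda>n. ereal \<rho> < ereal (I \<epsilon> n)) at_top"
    by (rule less_LiminfD)
  then obtain N where N: "\<And>n. n \<ge> N \<Longrightarrow> \<rho> < I \<epsilon> n"
    unfolding eventually_at_top_linorder by auto
  have ratio: "\<rho> < a t / a s" if st: "max N 1 \<le> s" "s \<le> t" "t \<le> (1 + \<epsilon>) * s" for s t
  proof -
    let ?S = "{(s', t'). s \<le> s' \<and> s' \<le> t' \<and> t' \<le> (1 + \<epsilon>) * s}"
    have "(s, t) \<in> ?S"
      using st by simp
    moreover have "bdd_below ((\<lambda>st. a (snd st) / a (fst st)) ` ?S)"
    proof (rule bdd_belowI2[of _ 0])
      fix st :: "real \<times> real"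
      assume "st \<in> ?S"
      then have "fst st \<ge> 1" "snd st \<ge> 1"
        using st by auto
      then show "0 \<le> a (snd st) / a (fst st)"
        using pos by (simp add: less_imp_le)
    qed
    ultimately have "I \<epsilon> s \<le> a t / a s"
      unfolding I_def using cINF_lower by fastforce
    with N[of s] st show ?thesis
      by simp
  qed
  show thesis
    by (rule that[of \<epsilon> "max N 1"]) (use \<open>\<epsilon> > 0\<close> ratio in auto)
qed

lemma liminf_ratio_imp_slowly_decreasing:
  fixes a :: "real \<Rightarrow> real"
  assumes pos: "\<And>n. n \<ge> 1 \<Longrightarrow> a n > 0"
    and liminf: "\<exists>L. ((\<lambda>\<epsilon>. Liminf at_top (\<lambda>n::real. ereal
                    (INF st \<in> {(s, t). n \<le> s \<and> s \<le> t \<and> t \<le> (1 + \<epsilon>) * n}. a (snd st) / a (fst st))))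
                  \<longlongrightarrow> L) (at_right 0) \<and> L \<ge> 1"
  shows "slowly_decreasing (\<lambda>x. ln (a (exp x)))"
  unfolding slowly_decreasing_def
proof (intro allI impI)
  fix \<eta> :: real
  assume "\<eta> > 0"
  then obtain \<epsilon> N where "\<epsilon> > 0" "N \<ge> 1"
    and ratio: "\<And>s t. N \<le> s \<Longrightarrow> s \<le> t \<Longrightarrow> t \<le> (1 + \<epsilon>) * s \<Longrightarrow> exp (-\<eta>) < a t / a s"
    using liminf_ratio_bound[OF pos liminf, of "exp (-\<eta>)"] by auto
  have "ln (a (exp s)) - \<eta> \<le> ln (a (exp t))" if "ln N \<le> s" "s \<le> t" "t \<le> s + ln (1 + \<epsilon>)" for s t
  proof -
    have "N \<le> exp s"
      using exp_mono[OF \<open>ln N \<le> s\<close>] \<open>N \<ge> 1\<close> by simp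
    have "exp t \<le> exp (s + ln (1 + \<epsilon>))"
      using \<open>t \<le> s + ln (1 + \<epsilon>)\<close> by simp
    also have "\<dots> = (1 + \<epsilon>) * exp s"
      using \<open>\<epsilon> > 0\<close> by (simp add: exp_add)
    finally have "exp (-\<eta>) < a (exp t) / a (exp s)"
      using \<open>N \<le> exp s\<close> \<open>s \<le> t\<close> by (intro ratio) auto
    have "1 \<le> exp s"
      using \<open>N \<le> exp s\<close> \<open>N \<ge> 1\<close> by linarith
    moreover have "exp s \<le> exp t"
      using \<open>s \<le> t\<close> by simp
    ultimately have "a (exp s) > 0" "a (exp t) > 0"
      using pos by auto
    then have "-\<eta> < ln (a (exp t) / a (exp s))"
      using \<open>exp (-\<eta>) < a (exp t) / a (exp s)\<close> by (subst ln_exp[symmetric], subst ln_less_cancel_iff) auto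
    with \<open>a (exp s) > 0\<close> \<open>a (exp t) > 0\<close> show ?thesis
      by (simp add: ln_div)
  qed
  moreover have "ln (1 + \<epsilon>) > 0"
    using \<open>\<epsilon> > 0\<close> by simp
  ultimately show "\<exists>\<delta>>0. \<exists>X. \<forall>s t. X \<le> s \<longrightarrow> s \<le> t \<longrightarrow> t \<le> s + \<delta> \<longrightarrow>
      ln (a (exp s)) - \<eta> \<le> ln (a (exp t))"
    by blast
qed

lemma ln_exp_first_difference_asymptotics:
  fixes a :: "real \<Rightarrow> real"
  assumes pos: "\<And>n. n \<ge> 1 \<Longrightarrow> a n > 0" and "m > 1" "c > 0"
    and ratio: "\<And>n. n \<ge> 1 \<Longrightarrow>
      \<exists>e. a (m^2 * n) / a (m * n) = (a (m * n) / a n) * (1 + e) \<and> \<bar>e\<bar> \<le> K * n powr (-c)"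
    and "slowly_decreasing (\<lambda>x. ln (a (exp x)))"
  shows "\<exists>L M X. \<forall>x\<ge>X. \<bar>ln (a (exp (x + ln m))) - ln (a (exp x)) - L\<bar> \<le> M * exp (-c * x)"
proof -
  obtain X where "X \<ge> 0" and small: "\<And>x. x \<ge> X \<Longrightarrow> K * exp (-c * x) \<le> 1 / 2"
    using exp_decay_eventually_le[OF \<open>c > 0\<close>, of "1 / 2" K] by auto
  have "\<bar>ln (a (exp (x + 2 * ln m))) - 2 * ln (a (exp (x + ln m))) + ln (a (exp x))\<bar>
      \<le> 2 * K * exp (-c * x)" if "x \<ge> X" for x
    using ln_second_difference_bound[OF pos _ ratio _ small[OF that]] \<open>m > 1\<close> \<open>X \<ge> 0\<close> that
    by simp
  then have "\<exists>L M. \<forall>x\<ge>X. \<bar>ln (a (exp (x + ln m))) - ln (a (exp x)) - L\<bar> \<le> M * exp (-c * x)"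
    using \<open>m > 1\<close> \<open>c > 0\<close> \<open>slowly_decreasing (\<lambda>x. ln (a (exp x)))\<close>
    by (intro first_difference_asymptotics[where f = "\<lambda>x. ln (a (exp x))"]) auto
  then show ?thesis
    by blast
qed

lemma powr_asymptotics_of_ln_exp:
  fixes a :: "real \<Rightarrow> real"
  assumes pos: "\<And>n. n \<ge> 1 \<Longrightarrow> a n > 0" and "c > 0"
    and lin: "\<And>x. x \<ge> X \<Longrightarrow> \<bar>ln (a (exp x)) - \<alpha> * x - B\<bar> \<le> M * exp (-c * x)"
  shows "\<exists>K N. \<forall>n\<ge>N. \<exists>e. a n = exp B * n powr \<alpha> * (1 + e) \<and> \<bar>e\<bar> \<le> K * n powr (-c)"
proof -
  obtain X1 where "X1 \<ge> 0" and small: "\<And>x. x \<ge> X1 \<Longrightarrow> \<bar>M\<bar> * exp (-c * x) \<le> 1"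
    using exp_decay_eventually_le[OF \<open>c > 0\<close>, of 1 "\<bar>M\<bar>"] by auto
  have "\<exists>e. a n = exp B * n powr \<alpha> * (1 + e) \<and> \<bar>e\<bar> \<le> 2 * \<bar>M\<bar> * n powr (-c)"
    if "n \<ge> exp (max X X1)" for n
  proof -
    define x where "x = ln n"
    have "n > 0"
      using that exp_gt_zero less_le_trans by blast
    have "ln (exp (max X X1)) \<le> ln n"
      using that \<open>n > 0\<close> by (subst ln_le_cancel_iff) auto
    then have "exp x = n" "x \<ge> max X X1"
      using \<open>n > 0\<close> by (simp_all add: x_def)
    define r where "r = ln (a n) - \<alpha> * x - B"
    have "\<bar>r\<bar> \<le> M * exp (-c * x)"
      using lin[of x] \<open>exp x = n\<close> \<open>x \<ge> max X X1\<close> by (simp add: r_def)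
    also have "\<dots> \<le> \<bar>M\<bar> * exp (-c * x)"
      by (intro mult_right_mono) auto
    finally have r: "\<bar>r\<bar> \<le> \<bar>M\<bar> * exp (-c * x)" .
    have "a n > 0"
      using pos \<open>exp x = n\<close> \<open>x \<ge> max X X1\<close> \<open>X1 \<ge> 0\<close> by auto
    then have "a n = exp (B + \<alpha> * x + r)"
      by (simp add: r_def)
    also have "\<dots> = exp B * n powr \<alpha> * (1 + (exp r - 1))"
      using \<open>n > 0\<close> by (simp add: exp_add powr_def x_def mult.commute)
    finally have "a n = exp B * n powr \<alpha> * (1 + (exp r - 1))" .
    moreover have "\<bar>exp r - 1\<bar> \<le> 2 * \<bar>M\<bar> * n powr (-c)"
    proof -
      have "\<bar>r\<bar> \<le> 1"
        using r small[of x] \<open>x \<ge> max X X1\<close> by simp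
      then have "\<bar>exp r - 1\<bar> \<le> 2 * \<bar>r\<bar>"
        by (rule abs_exp_minus_one_le)
      also have "\<dots> \<le> 2 * \<bar>M\<bar> * exp (-c * x)"
        using r by simp
      finally show ?thesis
        using \<open>n > 0\<close> by (simp add: powr_def x_def)
    qed
    ultimately show ?thesis
      by blast
  qed
  then show ?thesis
    by blast
qed

lemma ln3_ln2_incommensurable:
  fixes a b :: nat
  assumes "b > 0"
  shows "real b * ln 3 \<noteq> real a * ln (2::real)"
proof
  assume eq: "real b * ln 3 = real a * ln (2::real)"
  have "(3::real) ^ b = exp (real b * ln 3)"
    by (simp add: exp_of_nat_mult)
  also have "\<dots> = 2 ^ a"
    unfolding eq by (simp add: exp_of_nat_mult)
  finally have "(3::nat) ^ b = 2 ^ a"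
    by (metis of_nat_eq_iff of_nat_numeral of_nat_power)
  moreover have "odd ((3::nat) ^ b)"
    by simp
  ultimately have "a = 0"
    by simp
  with \<open>(3::nat) ^ b = 2 ^ a\<close> \<open>b > 0\<close> show False
    by simp
qed

theorem lemma2p6:
  fixes a :: "real \<Rightarrow> real"
  assumes pos: "\<And>n. n \<ge> 1 \<Longrightarrow> a n > 0"
    and cond1: "\<exists>c>0. \<exists>K. \<forall>m n. 1.1 < m \<and> m < 10 \<and> n \<ge> 1 \<longrightarrow>
        (\<exists>e. a (m^2 * n) / a (m * n) = (a (m * n) / a n) * (1 + e) \<and> \<bar>e\<bar> \<le> K * n powr (-c))"
    and cond2: "\<exists>L. ((\<lambda>\<epsilon>. Liminf at_top (\<lambda>n::real. ereal
                    (INF st \<in> {(s, t). n \<le> s \<and> s \<le> t \<and> t \<le> (1 + \<epsilon>) * n}. a (snd st) / a (fst st))))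
                  \<longlongrightarrow> L) (at_right 0) \<and> L \<ge> 1"
  shows "\<exists>C \<alpha> c'. 0 < C \<and> 0 < c' \<and> (\<exists>K N. \<forall>n \<ge> N.
           (\<exists>e. a n = C * n powr \<alpha> * (1 + e) \<and> \<bar>e\<bar> \<le> K * n powr (-c')))"
proof -
  obtain c K where "c > 0" and ratio: "\<forall>m n. 1.1 < m \<and> m < 10 \<and> n \<ge> 1 \<longrightarrow>
      (\<exists>e. a (m^2 * n) / a (m * n) = (a (m * n) / a n) * (1 + e) \<and> \<bar>e\<bar> \<le> K * n powr (-c))"
    using cond1 by blast
  define f where "f x = ln (a (exp x))" for x
  have "slowly_decreasing f"
    unfolding f_def using pos cond2 by (rule liminf_ratio_imp_slowly_decreasing)
  have first_difference: "\<exists>L M X. \<forall>x\<ge>X. \<bar>f (x + ln m) - f x - L\<bar> \<le> M * exp (-c * x)"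
    if "1.1 < m" "m < 10" for m :: real
  proof -
    have "\<exists>e. a (m^2 * n) / a (m * n) = (a (m * n) / a n) * (1 + e) \<and> \<bar>e\<bar> \<le> K * n powr (-c)"
      if "n \<ge> 1" for n
      using ratio \<open>1.1 < m\<close> \<open>m < 10\<close> that by blast
    from ln_exp_first_difference_asymptotics[OF pos _ \<open>c > 0\<close> this] show ?thesis
      using \<open>1.1 < m\<close> \<open>slowly_decreasing f\<close> unfolding f_def by simp
  qed
  \<comment> \<open>Condition (1) is only used for m = 2 and m = 3, whose logarithms are incommensurable.\<close>
  obtain L2 M2 X2 where "\<And>x. x \<ge> X2 \<Longrightarrow> \<bar>f (x + ln 2) - f x - L2\<bar> \<le> M2 * exp (-c * x)"
    using first_difference[of 2] by auto
  moreover obtain L3 M3 X3 where "\<And>x. x \<ge> X3 \<Longrightarrow> \<bar>f (x + ln 3) - f x - L3\<bar> \<le> M3 * exp (-c * x)"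
    using first_difference[of 3] by auto
  ultimately have "\<exists>\<alpha> B M. \<forall>x\<ge>max X2 X3. \<bar>f x - \<alpha> * x - B\<bar> \<le> M * exp (-c * x)"
    using \<open>c > 0\<close> ln3_ln2_incommensurable \<open>slowly_decreasing f\<close>
    by (intro incommensurable_differences_imp_linear[where \<mu> = "ln 2" and \<mu>' = "ln 3"]) auto
  then obtain \<alpha> B M
    where lin: "\<And>x. x \<ge> max X2 X3 \<Longrightarrow> \<bar>ln (a (exp x)) - \<alpha> * x - B\<bar> \<le> M * exp (-c * x)"
    unfolding f_def by blast
  show ?thesis
    using powr_asymptotics_of_ln_exp[OF pos \<open>c > 0\<close> lin] \<open>c > 0\<close> exp_gt_zero[of B] by blast
qed

end
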